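(* Let $\alpha\ge0$ and $n>\alpha$. Let $B_r$ be the event that $\mathscr{G}(n,\alpha/n)$ has no connected component with more than $r$ vertices and let $L$ be the event that all connected components of $\mathscr{G}(n,\alpha/n)$ are trees. Then for all $r\ge1$, \[ P_{n,\alpha}(B_r)\le P_{n,\alpha}(L)\Bigl(1-\frac{\alpha}{n}\Bigr)^{-\frac12 rn}. \]
   Context: $\mathscr{G}(n,p)$ is the random graph on vertex set $\{1,\dots,n\}$ in which each of the $\binom n2$ unordered pairs is an edge independently with probability $p$; here $p=\alpha/n$, and $P_{n,\alpha}$ is the corresponding probability measure. *)

theory Defs
  imports Complex_Main
begin

definition all_edges :: "nat \<Rightarrow> nat set set" where
  "all_edges n = {e. \<exists>i j. 1 \<le> i \<and> i < j \<and> j \<le> n \<and> e = {i, j}}"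

text \<open>Probability of an event (predicate on edge sets) in G(n,p):
  each of the binom(n,2) pairs is an edge independently with probability p.\<close>
definition gnp_prob :: "nat \<Rightarrow> real \<Rightarrow> (nat set set \<Rightarrow> bool) \<Rightarrow> real" where
  "gnp_prob n p A =
     (\<Sum>E\<in>{E. E \<subseteq> all_edges n \<and> A E}.
        p ^ card E * (1 - p) ^ (card (all_edges n) - card E))"

definition adj :: "nat set set \<Rightarrow> nat \<Rightarrow> nat \<Rightarrow> bool" where
  "adj E u v \<longleftrightarrow> {u, v} \<in> E \<and> u \<noteq> v"

definition component :: "nat \<Rightarrow> nat set set \<Rightarrow> nat \<Rightarrow> nat set" where
  "component n E v = {u \<in> {1..n}. (adj E)\<^sup>*\<^sup>* v u}"

definition no_big_comp :: "nat \<Rightarrow> nat \<Rightarrow> nat set set \<Rightarrow> bool" where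
  "no_big_comp n r E \<longleftrightarrow> (\<forall>v\<in>{1..n}. card (component n E v) \<le> r)"

text \<open>L: every connected component is a tree, i.e. the (connected) induced subgraph
  on each component has exactly (#vertices - 1) edges.\<close>
definition all_trees :: "nat \<Rightarrow> nat set set \<Rightarrow> bool" where
  "all_trees n E \<longleftrightarrow>
     (\<forall>v\<in>{1..n}. card {e \<in> E. e \<subseteq> component n E v} = card (component n E v) - 1)"

end

theory Submission
  imports Defs
begin

text \<open>
  A graph \<open>E\<close> contains a spanning forest \<open>F \<subseteq> E\<close>, grown greedily by adding an edge of \<open>E\<close>
  only when it joins two different components; every other edge of \<open>E\<close> has both endpoints in
  one component of \<open>F\<close>. If all components of \<open>E\<close> (hence of \<open>F\<close>) have at most \<open>r\<close> vertices,
  there are at most \<open>rn/2\<close> such candidate edges, and summing the \<open>G(n,p)\<close> weights of all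
  graphs \<open>F \<union> Y\<close> with \<open>Y\<close> a set of candidate edges gives \<open>P(F) (1 - p)^(-|candidates|)\<close>.
  Summing over the forests \<open>F\<close> yields the bound.
\<close>

section \<open>Reachability and components\<close>

lemma all_edges_iff: "e \<in> all_edges n \<longleftrightarrow> e \<subseteq> {1..n} \<and> card e = 2"
proof
  assume "e \<subseteq> {1..n} \<and> card e = 2"
  then obtain i j where ij: "e = {i, j}" "i \<noteq> j" "i \<in> {1..n}" "j \<in> {1..n}"
    by (auto simp: card_2_iff)
  show "e \<in> all_edges n"
  proof (cases "i < j")
    case True
    with ij show ?thesis unfolding all_edges_def by auto
  next
    case False
    with ij have "1 \<le> j \<and> j < i \<and> i \<le> n \<and> e = {j, i}" by (auto simp: insert_commute)
    then show ?thesis unfolding all_edges_def by blast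
  qed
qed (force simp: all_edges_def)

lemma finite_all_edges: "finite (all_edges n)"
  by (rule finite_subset[of _ "Pow {1..n}"]) (simp_all add: all_edges_iff subset_iff)

lemma adj_commute: "adj E u v = adj E v u"
  unfolding adj_def by (auto simp: insert_commute)

lemma rtranclp_adj_sym: "(adj E)\<^sup>*\<^sup>* u v \<Longrightarrow> (adj E)\<^sup>*\<^sup>* v u"
proof (induction rule: rtranclp_induct)
  case (step y z)
  then show ?case by (metis adj_commute converse_rtranclp_into_rtranclp)
qed simp

lemma rtranclp_adj_mono: "F \<subseteq> E \<Longrightarrow> (adj F)\<^sup>*\<^sup>* u v \<Longrightarrow> (adj E)\<^sup>*\<^sup>* u v"
  by (erule rtranclp_mono[THEN predicate2D, rotated]) (auto simp: adj_def)

lemma rtranclp_adj_insert_iff: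
  "(adj (insert {u, v} F))\<^sup>*\<^sup>* a b \<longleftrightarrow>
     (adj F)\<^sup>*\<^sup>* a b \<or> (adj F)\<^sup>*\<^sup>* a u \<and> (adj F)\<^sup>*\<^sup>* v b \<or> (adj F)\<^sup>*\<^sup>* a v \<and> (adj F)\<^sup>*\<^sup>* u b"
    (is "?reach' a b \<longleftrightarrow> ?rhs a b")
proof
  assume "?reach' a b"
  then show "?rhs a b"
  proof (induction rule: rtranclp_induct)
    case (step y z)
    then have "adj F y z \<or> {y, z} = {u, v}"
      by (auto simp: adj_def)
    with step.IH show ?case
      by (auto simp: doubleton_eq_iff intro: rtranclp.rtrancl_into_rtrancl)
  qed simp
next
  have uv: "?reach' u v" "?reach' v u"
    by (cases "u = v"; auto simp: adj_def insert_commute)+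
  have "(adj F)\<^sup>*\<^sup>* x y \<Longrightarrow> ?reach' x y" for x y
    by (rule rtranclp_adj_mono[rotated]) auto
  then show "?rhs a b \<Longrightarrow> ?reach' a b"
    using uv by (meson rtranclp_trans)
qed

lemma component_subset: "component n E v \<subseteq> {1..n}"
  unfolding component_def by auto

lemma finite_component: "finite (component n E v)"
  by (rule finite_subset[OF component_subset]) simp

lemma self_in_component: "v \<in> {1..n} \<Longrightarrow> v \<in> component n E v"
  unfolding component_def by auto

lemma component_eq: "u \<in> component n E v \<Longrightarrow> component n E u = component n E v"
  unfolding component_def by (blast intro: rtranclp_trans rtranclp_adj_sym)

lemma card_component_mono: "F \<subseteq> E \<Longrightarrow> card (component n F v) \<le> card (component n E v)"
  by (rule card_mono[OF finite_component]) (auto simp: component_def intro: rtranclp_adj_mono)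

definition joined_in :: "nat set set \<Rightarrow> nat set \<Rightarrow> bool" where
  "joined_in F e \<longleftrightarrow> (\<forall>a\<in>e. \<forall>b\<in>e. (adj F)\<^sup>*\<^sup>* a b)"

lemma joined_in_mono: "joined_in F e \<Longrightarrow> F \<subseteq> E \<Longrightarrow> joined_in E e"
  unfolding joined_in_def using rtranclp_adj_mono by blast

lemma joined_in_edge:
  assumes "F \<subseteq> all_edges n" "e \<in> F"
  shows "joined_in F e"
proof -
  have "card e = 2"
    using assms by (auto simp: all_edges_iff)
  then obtain i j where "e = {i, j}" "i \<noteq> j"
    by (auto simp: card_2_iff)
  then have "adj F i j" "adj F j i"
    using assms(2) by (auto simp: adj_def insert_commute)
  then show ?thesis
    using \<open>e = {i, j}\<close> unfolding joined_in_def by auto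
qed

lemma edge_subset_component:
  assumes "F \<subseteq> all_edges n" "e \<in> F" "a \<in> e" "a \<in> component n F v"
  shows "e \<subseteq> component n F v"
proof
  fix b
  assume "b \<in> e"
  moreover have "e \<subseteq> {1..n}"
    using assms(1,2) all_edges_iff by blast
  ultimately have "(adj F)\<^sup>*\<^sup>* a b" "b \<in> {1..n}"
    using assms(3) joined_in_edge[OF assms(1,2)] unfolding joined_in_def by blast+
  with assms(4) show "b \<in> component n F v"
    unfolding component_def by (auto intro: rtranclp_trans)
qed

section \<open>Spanning forests\<close>

lemma component_insert_edge:
  assumes "w \<in> {1..n}"
  shows "component n (insert {u, v} F) w =
    (if w \<in> component n F u \<union> component n F v then component n F u \<union> component n F v
     else component n F w)"
proof (cases "w \<in> component n F u \<union> component n F v")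
  case True
  then have "(adj F)\<^sup>*\<^sup>* w u \<or> (adj F)\<^sup>*\<^sup>* w v"
    unfolding component_def by (blast intro: rtranclp_adj_sym)
  with True show ?thesis
    unfolding component_def rtranclp_adj_insert_iff by (auto intro: rtranclp_trans rtranclp_adj_sym)
next
  case False
  with assms have "\<not> (adj F)\<^sup>*\<^sup>* w u" "\<not> (adj F)\<^sup>*\<^sup>* w v"
    unfolding component_def by (blast intro: rtranclp_adj_sym)+
  with False show ?thesis
    unfolding component_def rtranclp_adj_insert_iff by auto
qed

lemma edges_within_union_components:
  assumes "F \<subseteq> all_edges n"
  shows "{f \<in> F. f \<subseteq> component n F u \<union> component n F v} =
    {f \<in> F. f \<subseteq> component n F u} \<union> {f \<in> F. f \<subseteq> component n F v}"
proof -
  have "f \<subseteq> component n F u \<or> f \<subseteq> component n F v"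
    if "f \<in> F" "f \<subseteq> component n F u \<union> component n F v" for f
  proof -
    from that assms obtain a where "a \<in> f"
      by (fastforce simp: all_edges_iff)
    with that show ?thesis
      using edge_subset_component[OF assms \<open>f \<in> F\<close>] by blast
  qed
  then show ?thesis by blast
qed

lemma all_trees_insert:
  assumes F: "F \<subseteq> all_edges n" and e: "e \<in> all_edges n" "\<not> joined_in F e"
    and trees: "all_trees n F"
  shows "all_trees n (insert e F)"
  unfolding all_trees_def
proof
  fix w
  assume w: "w \<in> {1..n}"
  obtain u v where e_uv: "e = {u, v}" and uv: "u \<in> {1..n}" "v \<in> {1..n}"
    using e(1) by (auto simp: all_edges_iff card_2_iff)
  have not_reach: "\<not> (adj F)\<^sup>*\<^sup>* u v"
    using e(2) unfolding e_uv joined_in_def by (auto intro: rtranclp_adj_sym)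
  define Cu where "Cu = component n F u"
  define Cv where "Cv = component n F v"
  define edges_in where "edges_in C = {f \<in> F. f \<subseteq> C}" for C
  have Cu_Cv: "u \<in> Cu" "v \<in> Cv" "v \<notin> Cu" "u \<notin> Cv" "Cu \<inter> Cv = {}"
    using uv not_reach unfolding Cu_def Cv_def component_def
    by (auto intro: rtranclp_adj_sym rtranclp_trans)
  have card_edges_in: "card (edges_in (component n F x)) = card (component n F x) - 1"
    if "x \<in> {1..n}" for x
    using trees that unfolding all_trees_def edges_in_def by blast
  have finite_F: "finite F"
    using F finite_all_edges by (rule finite_subset)
  show "card {f \<in> insert e F. f \<subseteq> component n (insert e F) w}
      = card (component n (insert e F) w) - 1"
  proof (cases "w \<in> Cu \<union> Cv")
    case True
    have "{f \<in> insert e F. f \<subseteq> Cu \<union> Cv} = insert e (edges_in Cu \<union> edges_in Cv)"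
      using edges_within_union_components[OF F] Cu_Cv
      unfolding e_uv edges_in_def Cu_def Cv_def by auto
    moreover have "e \<notin> edges_in Cu \<union> edges_in Cv"
      using Cu_Cv unfolding e_uv edges_in_def by auto
    moreover have "edges_in Cu \<inter> edges_in Cv = {}"
    proof -
      have "{} \<notin> F"
        using F all_edges_iff[of "{}" n] by auto
      moreover have "f = {}" if "f \<subseteq> Cu" "f \<subseteq> Cv" for f
        using that Cu_Cv(5) by blast
      ultimately show ?thesis
        unfolding edges_in_def by blast
    qed
    moreover have "card (Cu \<union> Cv) = card Cu + card Cv" "card Cu > 0" "card Cv > 0"
      using Cu_Cv by (auto simp: Cu_def Cv_def finite_component card_Un_disjoint card_gt_0_iff)
    ultimately show ?thesis
      using True card_edges_in[OF uv(1)] card_edges_in[OF uv(2)] finite_F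
      unfolding component_insert_edge[OF w] e_uv Cu_def Cv_def edges_in_def
      by (simp add: card_Un_disjoint)
  next
    case False
    then have "u \<notin> component n F w"
      using component_eq self_in_component[OF w] unfolding Cu_def by blast
    then have "{f \<in> insert e F. f \<subseteq> component n F w} = edges_in (component n F w)"
      unfolding e_uv edges_in_def by auto
    with False show ?thesis
      using card_edges_in[OF w] unfolding component_insert_edge[OF w] e_uv Cu_def Cv_def
      by simp
  qed
qed

lemma all_trees_empty: "all_trees n {}"
proof -
  have "(adj {})\<^sup>*\<^sup>* v u \<Longrightarrow> u = v" for u v
    by (induction rule: rtranclp_induct) (simp_all add: adj_def)
  then have "component n {} v = {v}" if "v \<in> {1..n}" for v
    using that unfolding component_def by auto
  then show ?thesis
    unfolding all_trees_def by simp
qed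

lemma spanning_forest_exists:
  assumes "E \<subseteq> all_edges n"
  shows "\<exists>F \<subseteq> E. all_trees n F \<and> (\<forall>e\<in>E. joined_in F e)"
  using finite_subset[OF assms finite_all_edges] assms
proof (induction rule: finite_subset_induct')
  case empty
  show ?case using all_trees_empty by blast
next
  case (insert e E)
  then obtain F where F: "F \<subseteq> E" "all_trees n F" "\<forall>e'\<in>E. joined_in F e'"
    by blast
  define F' where "F' = (if joined_in F e then F else insert e F)"
  have "F \<subseteq> F'" "F' \<subseteq> insert e E" "F' \<subseteq> all_edges n"
    using F insert.hyps unfolding F'_def by auto
  moreover have "all_trees n F'"
    using F all_trees_insert[of F n e] insert.hyps unfolding F'_def by auto
  moreover have "joined_in F' e"
    using joined_in_edge[OF \<open>F' \<subseteq> all_edges n\<close>, of e] unfolding F'_def by auto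
  then have "\<forall>e'\<in>insert e E. joined_in F' e'"
    using F(3) joined_in_mono[OF _ \<open>F \<subseteq> F'\<close>] by blast
  ultimately show ?case
    by blast
qed

definition spanning_forest :: "nat \<Rightarrow> nat set set \<Rightarrow> nat set set" where
  "spanning_forest n E = (SOME F. F \<subseteq> E \<and> all_trees n F \<and> (\<forall>e\<in>E. joined_in F e))"

lemma spanning_forest:
  assumes "E \<subseteq> all_edges n"
  shows "spanning_forest n E \<subseteq> E" "all_trees n (spanning_forest n E)"
    "\<forall>e\<in>E. joined_in (spanning_forest n E) e"
  using someI_ex[OF spanning_forest_exists[OF assms]] unfolding spanning_forest_def by blast+

lemma no_big_comp_subset: "F \<subseteq> E \<Longrightarrow> no_big_comp n r E \<Longrightarrow> no_big_comp n r F"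
  unfolding no_big_comp_def using card_component_mono le_trans by blast

lemma card_joined_edges_le:
  assumes "no_big_comp n r F"
  shows "2 * card {e \<in> all_edges n. joined_in F e} \<le> n * r"
proof -
  define J where "J = {e \<in> all_edges n. joined_in F e}"
  have "finite J"
    unfolding J_def using finite_all_edges by simp
  have "card {e \<in> J. a \<in> e} \<le> r" if a: "a \<in> {1..n}" for a
  proof -
    have "{e \<in> J. a \<in> e} \<subseteq> (\<lambda>b. {a, b}) ` component n F a"
    proof
      fix e
      assume "e \<in> {e \<in> J. a \<in> e}"
      then have e: "e \<subseteq> {1..n}" "card e = 2" "a \<in> e" "joined_in F e"
        unfolding J_def all_edges_iff by auto
      then obtain x y where "e = {x, y}"
        by (auto simp: card_2_iff)
      with e(3) have "e = {a, if a = x then y else x}"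
        by auto
      moreover have "(if a = x then y else x) \<in> component n F a"
        using e \<open>e = {x, y}\<close> unfolding joined_in_def component_def by auto
      ultimately show "e \<in> (\<lambda>b. {a, b}) ` component n F a"
        by blast
    qed
    then have "card {e \<in> J. a \<in> e} \<le> card (component n F a)"
      using card_mono[OF finite_imageI[OF finite_component]] card_image_le[OF finite_component]
      by (meson le_trans)
    then show ?thesis
      using assms a unfolding no_big_comp_def by (meson le_trans)
  qed
  then have "(\<Sum>a\<in>{1..n}. card {e \<in> J. a \<in> e}) \<le> n * r"
    using sum_mono[of "{1..n}" "\<lambda>a. card {e \<in> J. a \<in> e}" "\<lambda>_. r"] by simp
  moreover have "(\<Sum>a\<in>{1..n}. card {e \<in> J. a \<in> e}) = 2 * card J"
  proof (rule sum_multicount[OF _ \<open>finite J\<close>])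
    have "{a \<in> {1..n}. a \<in> e} = e" if "e \<in> J" for e
      using that unfolding J_def all_edges_iff by blast
    then show "\<forall>e\<in>J. card {a \<in> {1..n}. a \<in> e} = 2"
      unfolding J_def all_edges_iff by simp
  qed simp
  ultimately show ?thesis
    unfolding J_def by simp
qed

section \<open>Weights of \<open>G(n,p)\<close>\<close>

definition gnp_weight :: "nat \<Rightarrow> real \<Rightarrow> 'a set \<Rightarrow> real" where
  "gnp_weight N p E = p ^ card E * (1 - p) ^ (N - card E)"

lemma gnp_prob_eq_sum_gnp_weight:
  "gnp_prob n p A = (\<Sum>E | E \<subseteq> all_edges n \<and> A E. gnp_weight (card (all_edges n)) p E)"
  unfolding gnp_prob_def gnp_weight_def ..

lemma gnp_weight_nonneg: "0 \<le> p \<Longrightarrow> p \<le> 1 \<Longrightarrow> 0 \<le> gnp_weight N p E"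
  unfolding gnp_weight_def by simp

lemma sum_Pow_bernoulli_weights:
  fixes p :: "'b :: comm_ring_1"
  assumes "finite X"
  shows "(\<Sum>Y\<in>Pow X. p ^ card Y * (1 - p) ^ (card X - card Y)) = 1"
proof -
  have "(1 :: 'b) = (\<Prod>x\<in>X. p + (1 - p))"
    by simp
  also have "\<dots> = (\<Sum>Y\<in>Pow X. (\<Prod>x\<in>Y. p) * (\<Prod>x\<in>X - Y. 1 - p))"
    by (rule prod_add[OF assms])
  also have "\<dots> = (\<Sum>Y\<in>Pow X. p ^ card Y * (1 - p) ^ (card X - card Y))"
    using assms by (intro sum.cong) (auto simp: card_Diff_subset finite_subset)
  finally show ?thesis
    by simp
qed

lemma sum_gnp_weight_interval:
  assumes "finite J" "F \<subseteq> J" "card J \<le> N" "p \<noteq> 1"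
  shows "(\<Sum>E | F \<subseteq> E \<and> E \<subseteq> J. gnp_weight N p E) = gnp_weight N p F / (1 - p) ^ card (J - F)"
proof -
  define X where "X = J - F"
  have "finite X" "finite F" "F \<inter> X = {}"
    using assms finite_subset unfolding X_def by auto
  have "card F + card X \<le> N"
    using card_Diff_subset[OF \<open>finite F\<close> assms(2)] card_mono[OF assms(1,2)] assms(3)
    unfolding X_def by linarith
  have "{E. F \<subseteq> E \<and> E \<subseteq> J} = (\<union>) F ` Pow X"
    using assms(2) unfolding X_def by auto
  moreover have "inj_on ((\<union>) F) (Pow X)"
    using \<open>F \<inter> X = {}\<close> by (auto intro!: inj_onI)
  moreover have "gnp_weight N p (F \<union> Y) * (1 - p) ^ card X
      = gnp_weight N p F * (p ^ card Y * (1 - p) ^ (card X - card Y))" if "Y \<subseteq> X" for Y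
  proof -
    have "finite Y" "F \<inter> Y = {}"
      using that \<open>finite X\<close> \<open>F \<inter> X = {}\<close> finite_subset by auto
    then have "card (F \<union> Y) = card F + card Y"
      using \<open>finite F\<close> by (simp add: card_Un_disjoint)
    have "card Y \<le> card X"
      using that \<open>finite X\<close> by (rule card_mono[rotated])
    then have exponents: "N - card (F \<union> Y) + card X = (N - card F) + (card X - card Y)"
      using \<open>card F + card X \<le> N\<close> \<open>card (F \<union> Y) = card F + card Y\<close> by linarith
    have "gnp_weight N p (F \<union> Y) * (1 - p) ^ card X
        = p ^ card F * p ^ card Y * (1 - p) ^ (N - card (F \<union> Y) + card X)"
      unfolding gnp_weight_def \<open>card (F \<union> Y) = card F + card Y\<close> by (simp add: power_add)
    also have "\<dots> = gnp_weight N p F * (p ^ card Y * (1 - p) ^ (card X - card Y))"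
      unfolding exponents gnp_weight_def by (simp add: power_add)
    finally show ?thesis .
  qed
  ultimately have "(\<Sum>E | F \<subseteq> E \<and> E \<subseteq> J. gnp_weight N p E) * (1 - p) ^ card X = gnp_weight N p F"
    using sum_Pow_bernoulli_weights[OF \<open>finite X\<close>, of p]
    by (simp add: sum.reindex sum_distrib_right sum_distrib_left[symmetric])
  with assms(4) show ?thesis
    unfolding X_def by (simp add: eq_divide_eq)
qed

lemma sum_gnp_weight_joined_supersets_le:
  assumes p: "0 \<le> p" "p < 1" and F: "F \<subseteq> all_edges n" "no_big_comp n r F"
  shows "(\<Sum>E | F \<subseteq> E \<and> E \<subseteq> {e \<in> all_edges n. joined_in F e}. gnp_weight (card (all_edges n)) p E)
    \<le> gnp_weight (card (all_edges n)) p F * (1 - p) powr (- (1/2) * real r * real n)"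
proof -
  define J where "J = {e \<in> all_edges n. joined_in F e}"
  have "finite J" "F \<subseteq> J"
    using F joined_in_edge finite_all_edges unfolding J_def by auto
  have "card J \<le> card (all_edges n)"
    unfolding J_def by (rule card_mono[OF finite_all_edges]) auto
  have "2 * card (J - F) \<le> n * r"
    using card_joined_edges_le[OF F(2)] card_mono[OF \<open>finite J\<close>, of "J - F"]
    unfolding J_def by auto
  then have "- (1/2) * real r * real n \<le> - real (card (J - F))"
    by (simp add: field_simps flip: of_nat_mult of_nat_le_iff)
  then have "(1 - p) powr (- real (card (J - F))) \<le> (1 - p) powr (- (1/2) * real r * real n)"
    by (rule powr_mono') (use p in auto)
  moreover have "(1 - p) powr (- real (card (J - F))) = 1 / (1 - p) ^ card (J - F)"
    using p by (simp add: powr_minus_divide powr_realpow)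
  ultimately have "1 / (1 - p) ^ card (J - F) \<le> (1 - p) powr (- (1/2) * real r * real n)"
    by simp
  moreover have "0 \<le> gnp_weight (card (all_edges n)) p F"
    using p by (simp add: gnp_weight_nonneg)
  ultimately have "gnp_weight (card (all_edges n)) p F / (1 - p) ^ card (J - F)
      \<le> gnp_weight (card (all_edges n)) p F * (1 - p) powr (- (1/2) * real r * real n)"
    using mult_left_mono by fastforce
  then show ?thesis
    using sum_gnp_weight_interval[OF \<open>finite J\<close> \<open>F \<subseteq> J\<close> \<open>card J \<le> _\<close>] p
    unfolding J_def by simp
qed

lemma sum_le_sum_mult_by_fibres:
  fixes w :: "'a \<Rightarrow> real"
  assumes "finite S" "finite T" "g ` S \<subseteq> T" "\<And>y. y \<in> T \<Longrightarrow> 0 \<le> w y" "0 \<le> c"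
    and fibre: "\<And>y. y \<in> g ` S \<Longrightarrow> sum w {x \<in> S. g x = y} \<le> w y * c"
  shows "sum w S \<le> sum w T * c"
proof -
  have "sum w S = (\<Sum>y\<in>g ` S. sum w {x \<in> S. g x = y})"
    by (rule sum.image_gen[OF assms(1)])
  also have "\<dots> \<le> (\<Sum>y\<in>g ` S. w y * c)"
    by (rule sum_mono) (rule fibre)
  also have "\<dots> \<le> (\<Sum>y\<in>T. w y * c)"
    by (rule sum_mono2[OF assms(2,3)]) (use assms(4,5) in auto)
  also have "\<dots> = sum w T * c"
    by (simp add: sum_distrib_right)
  finally show ?thesis .
qed

lemma sum_gnp_weight_spanning_forest_fibre_le:
  fixes p :: real
  assumes p: "0 \<le> p" "p < 1" and E: "E \<subseteq> all_edges n" "no_big_comp n r E"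
  defines "S \<equiv> {E. E \<subseteq> all_edges n \<and> no_big_comp n r E}" and "F \<equiv> spanning_forest n E"
  shows "sum (gnp_weight (card (all_edges n)) p) {E' \<in> S. spanning_forest n E' = F}
    \<le> gnp_weight (card (all_edges n)) p F * (1 - p) powr (- (1/2) * real r * real n)"
proof -
  have "F \<subseteq> all_edges n" "no_big_comp n r F"
    using spanning_forest(1)[OF E(1)] E no_big_comp_subset unfolding F_def by auto
  have "{E' \<in> S. spanning_forest n E' = F}
      \<subseteq> {E'. F \<subseteq> E' \<and> E' \<subseteq> {e \<in> all_edges n. joined_in F e}}"
    using spanning_forest(1,3) unfolding S_def by blast
  then have "sum (gnp_weight (card (all_edges n)) p) {E' \<in> S. spanning_forest n E' = F}
      \<le> (\<Sum>E' | F \<subseteq> E' \<and> E' \<subseteq> {e \<in> all_edges n. joined_in F e}. gnp_weight (card (all_edges n)) p E')"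
    using p finite_all_edges
    by (intro sum_mono2) (auto intro: gnp_weight_nonneg finite_subset[of _ "Pow (all_edges n)"])
  also have "\<dots> \<le> gnp_weight (card (all_edges n)) p F * (1 - p) powr (- (1/2) * real r * real n)"
    by (rule sum_gnp_weight_joined_supersets_le) (use p \<open>F \<subseteq> all_edges n\<close> \<open>no_big_comp n r F\<close> in auto)
  finally show ?thesis .
qed

theorem lemma5p1:
  fixes \<alpha> :: real and n r :: nat
  assumes "\<alpha> \<ge> 0" and "real n > \<alpha>" and "r \<ge> 1"
  shows "gnp_prob n (\<alpha> / n) (no_big_comp n r)
           \<le> gnp_prob n (\<alpha> / n) (all_trees n) * (1 - \<alpha> / n) powr (- (1/2) * real r * real n)"
proof -
  define p where "p = \<alpha> / n"
  define S where "S = {E. E \<subseteq> all_edges n \<and> no_big_comp n r E}"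
  define T where "T = {E. E \<subseteq> all_edges n \<and> all_trees n E}"
  have p: "0 \<le> p" "p < 1"
    using assms unfolding p_def by (auto simp: divide_less_eq)
  have "finite S" "finite T"
    using finite_all_edges unfolding S_def T_def by (auto intro: finite_subset[of _ "Pow (all_edges n)"])
  let ?w = "gnp_weight (card (all_edges n)) p"
  let ?c = "(1 - p) powr (- (1/2) * real r * real n)"
  have "sum ?w S \<le> sum ?w T * ?c"
  proof (rule sum_le_sum_mult_by_fibres[OF \<open>finite S\<close> \<open>finite T\<close>])
    show "spanning_forest n ` S \<subseteq> T"
      using spanning_forest(1,2) unfolding S_def T_def by blast
    show "sum ?w {E \<in> S. spanning_forest n E = F} \<le> ?w F * ?c"
      if "F \<in> spanning_forest n ` S" for F
      using that sum_gnp_weight_spanning_forest_fibre_le[OF p] unfolding S_def by blast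
  qed (use p in \<open>auto intro!: gnp_weight_nonneg\<close>)
  then show ?thesis
    unfolding gnp_prob_eq_sum_gnp_weight S_def T_def p_def .
qed

end
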